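(* Let $\mathcal{A}$ be a weighted pushdown system with integer weight function $w$, let $\ell=|\Gamma|\cdot|Q|$ and $\epsilon=\frac{1}{\ell^{(\ell+1)^2}\cdot 2\ell}$. Then $\mathcal{A}^{\epsilon}$ (the same system with weight function $w+\epsilon$) has a good cycle reachable from the initial configuration if and only if for every $\delta>0$ the system $\mathcal{A}^{\delta}$ (with weight function $w+\delta$) has a good cycle reachable from the initial configuration.
   Context: A weighted pushdown system (WPS) is $\mathcal{A}=\langle Q,\Gamma,q_0,E,w\rangle$ with finite states $Q$, finite stack alphabet $\Gamma\ni\bot$ ($\bot$ never pushed or popped), edges $E\subseteq(Q\times\Gamma)\times(Q\times\mathrm{Com}(\Gamma))$ with $\mathrm{Com}(\Gamma)=\{\mathit{skip},\mathit{pop}\}\cup\{\mathit{push}(z)\}$, weights $w:E\to\mathbb{Z}$; initial configuration $(\bot,q_0)$; successor of $(\alpha,q)$ via edge $(q,\mathrm{Top}(\alpha),q',\mathit{com})$ is $(\mathit{com}(\alpha),q')$. For rational $r$, $w+r$ is the weight function $e\mapsto w(e)+r$. A configuration $(\alpha_i,q_i)$ in a path is a local minimum if $\alpha_i$ is a prefix of all later stacks in the path. A good cycle (w.r.t. a given weight function) is a finite path $\langle(\alpha_1,q_1),\dots,(\alpha_n,q_n)\rangle$ of positive total weight whose first configuration is a local minimum, with $q_1=q_n$ and $\mathrm{Top}(\alpha_1)=\mathrm{Top}(\alpha_n)$. *)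

theory Defs
  imports Complex_Main "HOL-Library.Sublist"
begin

text \<open>Stack commands. Stacks are lists with the bottom first and the top last,
  so that "prefix" in the sense of the paper is list prefix.\<close>

datatype 'g com = Skip | Pop | Push 'g

type_synonym ('q, 'g) edge = "('q \<times> 'g) \<times> ('q \<times> 'g com)"
type_synonym ('q, 'g) config = "'g list \<times> 'q"

fun apply_com :: "'g com \<Rightarrow> 'g list \<Rightarrow> 'g list" where
  "apply_com Skip \<alpha> = \<alpha>"
| "apply_com Pop \<alpha> = butlast \<alpha>"
| "apply_com (Push z) \<alpha> = \<alpha> @ [z]"

definition Top :: "'g list \<Rightarrow> 'g" where
  "Top \<alpha> = last \<alpha>"

definition wps :: "'q set \<Rightarrow> 'g set \<Rightarrow> 'g \<Rightarrow> 'q \<Rightarrow> ('q, 'g) edge set \<Rightarrow> bool" where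
  "wps Q \<Gamma> bt q0 E \<longleftrightarrow>
     finite Q \<and> finite \<Gamma> \<and> bt \<in> \<Gamma> \<and> q0 \<in> Q \<and>
     (\<forall>q g q' c. ((q, g), (q', c)) \<in> E \<longrightarrow>
        q \<in> Q \<and> g \<in> \<Gamma> \<and> q' \<in> Q \<and>
        (c = Pop \<longrightarrow> g \<noteq> bt) \<and>
        (\<forall>z. c = Push z \<longrightarrow> z \<in> \<Gamma> \<and> z \<noteq> bt))"

definition step :: "('q, 'g) edge set \<Rightarrow> ('q, 'g) config \<Rightarrow> ('q, 'g) edge \<Rightarrow> ('q, 'g) config \<Rightarrow> bool" where
  "step E c e c' \<longleftrightarrow> e \<in> E \<and>
     (\<exists>com. e = ((snd c, Top (fst c)), (snd c', com)) \<and> fst c' = apply_com com (fst c))"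

definition is_path :: "('q, 'g) edge set \<Rightarrow> ('q, 'g) config list \<Rightarrow> ('q, 'g) edge list \<Rightarrow> bool" where
  "is_path E cs es \<longleftrightarrow> cs \<noteq> [] \<and> length es = length cs - 1 \<and>
     (\<forall>i < length es. step E (cs ! i) (es ! i) (cs ! Suc i))"

definition path_weight :: "(('q, 'g) edge \<Rightarrow> rat) \<Rightarrow> ('q, 'g) edge list \<Rightarrow> rat" where
  "path_weight wt es = (\<Sum>e \<leftarrow> es. wt e)"

definition reachable :: "('q, 'g) edge set \<Rightarrow> 'g \<Rightarrow> 'q \<Rightarrow> ('q, 'g) config \<Rightarrow> bool" where
  "reachable E bt q0 c \<longleftrightarrow>
     (\<exists>cs es. is_path E cs es \<and> hd cs = ([bt], q0) \<and> last cs = c)"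

definition local_min :: "('q, 'g) config list \<Rightarrow> nat \<Rightarrow> bool" where
  "local_min cs i \<longleftrightarrow> (\<forall>j. i < j \<and> j < length cs \<longrightarrow> prefix (fst (cs ! i)) (fst (cs ! j)))"

definition good_cycle :: "('q, 'g) edge set \<Rightarrow> (('q, 'g) edge \<Rightarrow> rat)
    \<Rightarrow> ('q, 'g) config list \<Rightarrow> ('q, 'g) edge list \<Rightarrow> bool" where
  "good_cycle E wt cs es \<longleftrightarrow> is_path E cs es \<and> path_weight wt es > 0 \<and>
     local_min cs 0 \<and> snd (hd cs) = snd (last cs) \<and> Top (fst (hd cs)) = Top (fst (last cs))"

definition has_reachable_good_cycle ::
    "('q, 'g) edge set \<Rightarrow> 'g \<Rightarrow> 'q \<Rightarrow> (('q, 'g) edge \<Rightarrow> int) \<Rightarrow> rat \<Rightarrow> bool" where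
  "has_reachable_good_cycle E bt q0 w r \<longleftrightarrow>
     (\<exists>cs es. good_cycle E (\<lambda>e. of_int (w e) + r) cs es \<and> reachable E bt q0 (hd cs))"

end

theory Submission
  imports Defs "HOL-Library.Multiset"
begin

(* One direction is trivial, since eps > 0.  For the other, fix a reachable good
   cycle that is positive for w + eps.  Its first configuration is a local minimum, so the
   cycle never descends below its starting stack, and its edge sequence parses as a "climb":
   a list of unmatched pushes and well-nested "items" (a skip edge, or a push edge followed by a
   "hill" of items and the matching pop).  Pumping arguments (pigeonhole on states along hills
   and climbs, repeated keys along nested brackets) show that every climb has at most B edges,
   where B <= L^((L+1)^2) * 2L, or is pumpable: a nonempty multiset MP of at most B of its edges
   can be removed, or repeated any number of times, giving climbs with the same endpoints.
   Since eps * B <= 1, a short multiset of edges with positive (w + eps)-weight has nonnegative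
   integer weight, hence positive (w + delta)-weight.  By induction on the length, a cyclic
   climb of positive (w + eps)-weight thus yields one of positive (w + delta)-weight (shorten,
   or pump the positive part often enough), which runs as a good cycle from the same reachable
   configuration. *)

section \<open>Runs\<close>

text \<open>Runs are represented by a start configuration and an edge list; the configurations of
  the run are then determined.\<close>

definition next_config :: "('q, 'g) config \<Rightarrow> ('q, 'g) edge \<Rightarrow> ('q, 'g) config" where
  "next_config c e = (apply_com (snd (snd e)) (fst c), fst (snd e))"

fun run :: "('q, 'g) config \<Rightarrow> ('q, 'g) edge list \<Rightarrow> ('q, 'g) config list" where
  "run c [] = [c]"
| "run c (e # es) = c # run (next_config c e) es"

fun valid_run :: "('q, 'g) edge set \<Rightarrow> ('q, 'g) config \<Rightarrow> ('q, 'g) edge list \<Rightarrow> bool" where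
  "valid_run E c [] = True"
| "valid_run E c (e # es) = (e \<in> E \<and> fst e = (snd c, Top (fst c)) \<and> valid_run E (next_config c e) es)"

definition end_config :: "('q, 'g) config \<Rightarrow> ('q, 'g) edge list \<Rightarrow> ('q, 'g) config" where
  "end_config c es = last (run c es)"

lemma run_ne[simp]: "run c es \<noteq> []"
  by (cases es) auto

lemma hd_run[simp]: "hd (run c es) = c"
  by (cases es) auto

lemma length_run[simp]: "length (run c es) = Suc (length es)"
  by (induction es arbitrary: c) auto

lemma start_in_run[simp]: "c \<in> set (run c es)"
  by (cases es) auto

lemma end_config_Nil[simp]: "end_config c [] = c"
  by (simp add: end_config_def)

lemma end_config_Cons[simp]: "end_config c (e # es) = end_config (next_config c e) es"
  by (simp add: end_config_def)

lemma end_config_in_run: "end_config c es \<in> set (run c es)"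
  by (simp add: end_config_def)

lemma end_config_append: "end_config c (es1 @ es2) = end_config (end_config c es1) es2"
  by (induction es1 arbitrary: c) auto

lemma valid_run_append:
  "valid_run E c (es1 @ es2) \<longleftrightarrow> valid_run E c es1 \<and> valid_run E (end_config c es1) es2"
  by (induction es1 arbitrary: c) auto

lemma set_run_append:
  "set (run c (es1 @ es2)) = set (run c es1) \<union> set (run (end_config c es1) es2)"
proof (induction es1 arbitrary: c)
  case Nil
  then show ?case by (cases es2) auto
next
  case (Cons e es1)
  then show ?case by auto
qed

lemma valid_run_is_path: "valid_run E c es \<Longrightarrow> is_path E (run c es) es"
proof (induction es arbitrary: c)
  case Nil
  then show ?case by (simp add: is_path_def)
next
  case (Cons e es)
  then have IH: "is_path E (run (next_config c e) es) es" by simp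
  have st: "step E c e (next_config c e)"
    using Cons.prems by (cases e) (auto simp: step_def next_config_def)
  show ?case unfolding is_path_def
  proof (intro conjI allI impI)
    fix i assume i: "i < length (e # es)"
    show "step E (run c (e # es) ! i) ((e # es) ! i) (run c (e # es) ! Suc i)"
    proof (cases i)
      case 0 then show ?thesis using st by (cases es) auto
    next
      case (Suc j) then show ?thesis using IH i by (auto simp: is_path_def)
    qed
  qed auto
qed

lemma step_next_config:
  "step E c e c' \<Longrightarrow> c' = next_config c e \<and> e \<in> E \<and> fst e = (snd c, Top (fst c))"
  by (cases c') (auto simp: step_def next_config_def)

lemma is_path_run: "is_path E cs es \<Longrightarrow> cs = run (hd cs) es \<and> valid_run E (hd cs) es"
proof (induction es arbitrary: cs)
  case Nil
  then show ?case by (cases cs) (auto simp: is_path_def)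
next
  case (Cons e es)
  from Cons.prems obtain c cs' where cs: "cs = c # cs'" "cs' \<noteq> []"
    by (cases cs; cases "tl cs") (auto simp: is_path_def)
  have st: "step E c e (hd cs')"
    using Cons.prems cs by (auto simp: is_path_def hd_conv_nth)
  have p': "is_path E cs' es"
    using Cons.prems cs unfolding is_path_def by auto
  from Cons.IH[OF p'] step_next_config[OF st] show ?case using cs by auto
qed

abbreviation stays_above :: "'g list \<Rightarrow> ('q, 'g) config \<Rightarrow> ('q, 'g) edge list \<Rightarrow> bool" where
  "stays_above \<alpha> c es \<equiv> \<forall>c'\<in>set (run c es). prefix \<alpha> (fst c')"

section \<open>Well-nested decompositions of runs\<close>

text \<open>An item is a single skip edge or a push edge, a hill, and the matching pop edge;
  a hill is a sequence of items; a climb is a sequence of items and unmatched pushes.\<close>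

datatype ('q, 'g) item =
  Flat "('q, 'g) edge" | Bracket "('q, 'g) edge" "('q, 'g) item list" "('q, 'g) edge"

datatype ('q, 'g) citem = Closed "('q, 'g) item" | Open "('q, 'g) edge"

fun item_edges :: "('q, 'g) item \<Rightarrow> ('q, 'g) edge list" where
  "item_edges (Flat e) = [e]"
| "item_edges (Bracket e1 H e2) = e1 # concat (map item_edges H) @ [e2]"

abbreviation hill_edges :: "('q, 'g) item list \<Rightarrow> ('q, 'g) edge list" where
  "hill_edges H \<equiv> concat (map item_edges H)"

fun citem_edges :: "('q, 'g) citem \<Rightarrow> ('q, 'g) edge list" where
  "citem_edges (Closed x) = item_edges x"
| "citem_edges (Open e) = [e]"

abbreviation climb_edges :: "('q, 'g) citem list \<Rightarrow> ('q, 'g) edge list" where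
  "climb_edges D \<equiv> concat (map citem_edges D)"

inductive item_path :: "('q, 'g) edge set \<Rightarrow> 'q \<Rightarrow> 'g \<Rightarrow> ('q, 'g) item \<Rightarrow> 'q \<Rightarrow> bool"
  and hill_path :: "('q, 'g) edge set \<Rightarrow> 'q \<Rightarrow> 'g \<Rightarrow> ('q, 'g) item list \<Rightarrow> 'q \<Rightarrow> bool"
  for E where
  item_flat: "((q, g), (q', Skip)) \<in> E \<Longrightarrow> item_path E q g (Flat ((q, g), (q', Skip))) q'"
| item_bracket: "((q, g), (p, Push z)) \<in> E \<Longrightarrow> hill_path E p z H p' \<Longrightarrow> ((p', z), (q', Pop)) \<in> E \<Longrightarrow>
      item_path E q g (Bracket ((q, g), (p, Push z)) H ((p', z), (q', Pop))) q'"
| hill_nil: "hill_path E q g [] q"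
| hill_cons: "item_path E q g x q1 \<Longrightarrow> hill_path E q1 g H q' \<Longrightarrow> hill_path E q g (x # H) q'"

inductive climb_path :: "('q, 'g) edge set \<Rightarrow> 'q \<Rightarrow> 'g \<Rightarrow> ('q, 'g) citem list \<Rightarrow> 'q \<Rightarrow> 'g \<Rightarrow> bool"
  for E where
  climb_nil: "climb_path E q g [] q g"
| climb_closed: "item_path E q g x q1 \<Longrightarrow> climb_path E q1 g D q' g' \<Longrightarrow>
      climb_path E q g (Closed x # D) q' g'"
| climb_open: "((q, g), (p, Push z)) \<in> E \<Longrightarrow> climb_path E p z D q' g' \<Longrightarrow>
      climb_path E q g (Open ((q, g), (p, Push z)) # D) q' g'"

inductive_simps hill_path_Nil: "hill_path E q g [] q'"
inductive_simps hill_path_Cons: "hill_path E q g (x # H) q'"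
inductive_simps climb_path_Nil: "climb_path E q g [] q' g'"
inductive_simps climb_path_Closed: "climb_path E q g (Closed x # D) q' g'"
inductive_simps climb_path_Open: "climb_path E q g (Open e # D) q' g'"

lemma hill_path_append:
  "hill_path E q g (A @ B) q' \<longleftrightarrow> (\<exists>q1. hill_path E q g A q1 \<and> hill_path E q1 g B q')"
  by (induction A arbitrary: q) (auto simp: hill_path_Nil hill_path_Cons)

lemma climb_path_append:
  "climb_path E q g (A @ B) q' g' \<longleftrightarrow> (\<exists>q1 g1. climb_path E q g A q1 g1 \<and> climb_path E q1 g1 B q' g')"
proof (induction A arbitrary: q g)
  case Nil
  then show ?case by (auto simp: climb_path_Nil)
next
  case (Cons c A)
  then show ?case by (cases c) (auto simp: climb_path_Closed climb_path_Open)
qed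

lemma stays_above_append:
  "stays_above \<alpha> c (es1 @ es2) \<longleftrightarrow> stays_above \<alpha> c es1 \<and> stays_above \<alpha> (end_config c es1) es2"
  by (auto simp: set_run_append)

lemma stays_above_snoc: "stays_above (\<alpha> @ [z]) c es \<Longrightarrow> stays_above \<alpha> c es"
  unfolding prefix_def by fastforce

lemmas run_append_simps = valid_run_append end_config_append stays_above_append

lemma item_hill_semantics:
  "item_path E q g x q' \<Longrightarrow> Top \<alpha> = g \<Longrightarrow> valid_run E (\<alpha>, q) (item_edges x)
     \<and> end_config (\<alpha>, q) (item_edges x) = (\<alpha>, q') \<and> stays_above \<alpha> (\<alpha>, q) (item_edges x)"
  "hill_path E q g H q' \<Longrightarrow> Top \<alpha> = g \<Longrightarrow> valid_run E (\<alpha>, q) (hill_edges H)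
     \<and> end_config (\<alpha>, q) (hill_edges H) = (\<alpha>, q') \<and> stays_above \<alpha> (\<alpha>, q) (hill_edges H)"
proof (induction arbitrary: \<alpha> and \<alpha> rule: item_path_hill_path.inducts)
  case (item_flat q g q')
  then show ?case by (simp add: next_config_def)
next
  case (item_bracket q g p z H p' q')
  have "Top (\<alpha> @ [z]) = z" by (simp add: Top_def)
  from item_bracket(3)[OF this] have "valid_run E (\<alpha> @ [z], p) (hill_edges H)"
    "end_config (\<alpha> @ [z], p) (hill_edges H) = (\<alpha> @ [z], p')" "stays_above \<alpha> (\<alpha> @ [z], p) (hill_edges H)"
    using stays_above_snoc[where c = "(\<alpha> @ [z], p)" and es = "hill_edges H"] by auto
  then show ?case using item_bracket(1,4) item_bracket.prems
    by (simp add: run_append_simps next_config_def Top_def)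
next
  case (hill_nil q g)
  then show ?case by simp
next
  case (hill_cons q g x q1 H q')
  then show ?case by (simp add: run_append_simps)
qed

lemma climb_semantics:
  "climb_path E q g D q' g' \<Longrightarrow> Top \<alpha> = g \<Longrightarrow> valid_run E (\<alpha>, q) (climb_edges D)
    \<and> (\<exists>\<gamma>. end_config (\<alpha>, q) (climb_edges D) = (\<alpha> @ \<gamma>, q') \<and> Top (\<alpha> @ \<gamma>) = g')
    \<and> stays_above \<alpha> (\<alpha>, q) (climb_edges D)"
proof (induction arbitrary: \<alpha> rule: climb_path.induct)
  case (climb_nil q g)
  then show ?case by (intro conjI exI[of _ "[]"]) simp_all
next
  case (climb_closed q g x q1 D q' g')
  then show ?case using item_hill_semantics(1)[OF climb_closed(1) climb_closed.prems]
    by (simp add: run_append_simps)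
next
  case (climb_open q g p z D q' g')
  have "Top (\<alpha> @ [z]) = z" by (simp add: Top_def)
  from climb_open(3)[OF this] obtain \<gamma> where "valid_run E (\<alpha> @ [z], p) (climb_edges D)"
    "end_config (\<alpha> @ [z], p) (climb_edges D) = (\<alpha> @ [z] @ \<gamma>, q')" "Top (\<alpha> @ [z] @ \<gamma>) = g'"
    "stays_above \<alpha> (\<alpha> @ [z], p) (climb_edges D)"
    using stays_above_snoc[where c = "(\<alpha> @ [z], p)" and es = "climb_edges D"] by auto
  then show ?case using climb_open(1) climb_open.prems
    by (intro conjI exI[of _ "[z] @ \<gamma>"]) (simp_all add: next_config_def)
qed

lemma pop_below:
  assumes "prefix (\<alpha> @ [z]) \<beta>" "prefix \<alpha> (apply_com com \<beta>)" "\<not> prefix (\<alpha> @ [z]) (apply_com com \<beta>)"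
  shows "com = Pop \<and> \<beta> = \<alpha> @ [z] \<and> apply_com com \<beta> = \<alpha>"
proof (cases com)
  case Skip
  then show ?thesis using assms by simp
next
  case (Push y)
  then show ?thesis using assms by (simp add: prefix_prefix)
next
  case Pop
  from assms(1) obtain \<delta> where b: "\<beta> = \<alpha> @ [z] @ \<delta>" unfolding prefix_def by auto
  show ?thesis
  proof (cases "\<delta> = []")
    case True
    then show ?thesis using b Pop by simp
  next
    case False
    then have "butlast \<beta> = \<alpha> @ [z] @ butlast \<delta>" using b by (simp add: butlast_append)
    then have "prefix (\<alpha> @ [z]) (apply_com com \<beta>)" using Pop by (simp add: prefix_def)
    then show ?thesis using assms(3) by blast
  qed
qed

lemma first_exit:
  "valid_run E c es \<Longrightarrow> prefix (\<alpha> @ [z]) (fst c) \<Longrightarrow> stays_above \<alpha> c es \<Longrightarrow>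
   \<not> stays_above (\<alpha> @ [z]) c es \<Longrightarrow>
   \<exists>es1 e2 es2. es = es1 @ e2 # es2 \<and> stays_above (\<alpha> @ [z]) c es1
      \<and> fst (end_config c es1) = \<alpha> @ [z] \<and> snd (snd e2) = Pop \<and> fst (next_config (end_config c es1) e2) = \<alpha>"
proof (induction es arbitrary: c)
  case Nil
  then show ?case by simp
next
  case (Cons e es)
  show ?case
  proof (cases "prefix (\<alpha> @ [z]) (fst (next_config c e))")
    case True
    have "valid_run E (next_config c e) es" "stays_above \<alpha> (next_config c e) es"
      "\<not> stays_above (\<alpha> @ [z]) (next_config c e) es"
      using Cons.prems by auto
    from Cons.IH[OF this(1) True this(2,3)] obtain es1 e2 es2 where
      R: "es = es1 @ e2 # es2" "stays_above (\<alpha> @ [z]) (next_config c e) es1"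
      "fst (end_config (next_config c e) es1) = \<alpha> @ [z]" "snd (snd e2) = Pop"
      "fst (next_config (end_config (next_config c e) es1) e2) = \<alpha>"
      by blast
    show ?thesis
      using R Cons.prems(2) by (intro exI[of _ "e # es1"] exI[of _ e2] exI[of _ es2]) simp
  next
    case False
    have "prefix \<alpha> (fst (next_config c e))" using Cons.prems(3) by simp
    then have "snd (snd e) = Pop \<and> fst c = \<alpha> @ [z] \<and> fst (next_config c e) = \<alpha>"
      using pop_below[of \<alpha> z "fst c" "snd (snd e)"] Cons.prems(2) False by (simp add: next_config_def)
    then show ?thesis by (intro exI[of _ "[]"] exI[of _ e] exI[of _ es]) simp
  qed
qed

lemma not_prefix_butlast: "\<alpha> \<noteq> [] \<Longrightarrow> \<not> prefix \<alpha> (butlast \<alpha>)"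
  using prefix_length_le[of \<alpha> "butlast \<alpha>"] by (cases \<alpha>) auto

lemma not_prefix_snoc_self: "\<not> prefix (\<alpha> @ [z]) \<alpha>"
  using prefix_length_le by fastforce

text \<open>The first step of a run staying above its nonempty start stack is a skip or a push;
  a pop would descend below the start stack.\<close>
lemma first_step_above:
  assumes "valid_run E (\<alpha>, q) (e # es)" "stays_above \<alpha> (\<alpha>, q) (e # es)" "\<alpha> \<noteq> []"
  obtains (skip) q1 where "e = ((q, Top \<alpha>), (q1, Skip))" "e \<in> E"
      "next_config (\<alpha>, q) e = (\<alpha>, q1)" "valid_run E (\<alpha>, q1) es" "stays_above \<alpha> (\<alpha>, q1) es"
  | (push) q1 z where "e = ((q, Top \<alpha>), (q1, Push z))" "e \<in> E"
      "next_config (\<alpha>, q) e = (\<alpha> @ [z], q1)" "valid_run E (\<alpha> @ [z], q1) es"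
      "stays_above \<alpha> (\<alpha> @ [z], q1) es"
proof -
  obtain src q1 com where e: "e = (src, q1, com)" by (cases e) auto
  have src: "src = (q, Top \<alpha>)" and eE: "e \<in> E" and ok: "valid_run E (next_config (\<alpha>, q) e) es"
    using assms(1) e by auto
  have above: "stays_above \<alpha> (next_config (\<alpha>, q) e) es" using assms(2) by simp
  show thesis
  proof (cases com)
    case Skip
    then show ?thesis using that(1)[of q1] e src eE ok above by (simp add: next_config_def)
  next
    case Pop
    have "prefix \<alpha> (fst (next_config (\<alpha>, q) e))" using assms(2) by simp
    then have "prefix \<alpha> (butlast \<alpha>)" using e Pop by (simp add: next_config_def)
    then show ?thesis using assms(3) not_prefix_butlast by blast
  next
    case (Push z)
    then show ?thesis using that(2)[of q1 z] e src eE ok above by (simp add: next_config_def)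
  qed
qed

lemma matched_push:
  assumes ok: "valid_run E (\<alpha> @ [z], q1) es" and above: "stays_above \<alpha> (\<alpha> @ [z], q1) es"
    and leaves: "\<not> stays_above (\<alpha> @ [z]) (\<alpha> @ [z], q1) es"
  obtains es1 p' q2 es2 where "es = es1 @ ((p', z), (q2, Pop)) # es2" "((p', z), (q2, Pop)) \<in> E"
    "valid_run E (\<alpha> @ [z], q1) es1" "stays_above (\<alpha> @ [z]) (\<alpha> @ [z], q1) es1"
    "end_config (\<alpha> @ [z], q1) es1 = (\<alpha> @ [z], p')"
    "valid_run E (\<alpha>, q2) es2" "stays_above \<alpha> (\<alpha>, q2) es2"
    "end_config (\<alpha> @ [z], q1) es = end_config (\<alpha>, q2) es2"
proof -
  from first_exit[OF ok _ above leaves] obtain es1 e2 es2 where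
    S: "es = es1 @ e2 # es2" "stays_above (\<alpha> @ [z]) (\<alpha> @ [z], q1) es1"
      "fst (end_config (\<alpha> @ [z], q1) es1) = \<alpha> @ [z]" "snd (snd e2) = Pop"
    by auto
  define p' where "p' = snd (end_config (\<alpha> @ [z], q1) es1)"
  have c1: "end_config (\<alpha> @ [z], q1) es1 = (\<alpha> @ [z], p')"
    using S(3) p'_def by (metis prod.collapse)
  have ok1: "valid_run E (\<alpha> @ [z], q1) es1" and ok2: "valid_run E (\<alpha> @ [z], p') (e2 # es2)"
    using ok unfolding S(1) valid_run_append c1 by simp_all
  define q2 where "q2 = fst (snd e2)"
  have e2E: "e2 \<in> E" using ok2 by simp
  have e2: "e2 = ((p', z), (q2, Pop))"
    using ok2 S(4) unfolding q2_def by (cases e2) (auto simp: Top_def)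
  have n2: "next_config (\<alpha> @ [z], p') e2 = (\<alpha>, q2)" using e2 by (simp add: next_config_def)
  have "set (run (\<alpha>, q2) es2) \<subseteq> set (run (\<alpha> @ [z], q1) es)"
    unfolding S(1) set_run_append using c1 n2 by auto
  then have "stays_above \<alpha> (\<alpha>, q2) es2" using above by blast
  moreover have "valid_run E (\<alpha>, q2) es2" using ok2 n2 by simp
  moreover have "end_config (\<alpha> @ [z], q1) es = end_config (\<alpha>, q2) es2"
    unfolding S(1) end_config_append c1 using n2 by simp
  ultimately show thesis using that S(1,2) e2 e2E ok1 c1 by blast
qed

lemma parse_hill:
  "valid_run E (\<alpha>, q) es \<Longrightarrow> \<alpha> \<noteq> [] \<Longrightarrow> stays_above \<alpha> (\<alpha>, q) es \<Longrightarrow>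
   end_config (\<alpha>, q) es = (\<alpha>, q') \<Longrightarrow> \<exists>H. hill_path E q (Top \<alpha>) H q' \<and> hill_edges H = es"
proof (induction "length es" arbitrary: \<alpha> q q' es rule: less_induct)
  case less
  show ?case
  proof (cases es)
    case Nil
    then show ?thesis using less.prems(4) by (intro exI[of _ "[]"]) (simp add: hill_nil)
  next
    case (Cons e es')
    from less.prems(1,3)[unfolded Cons] less.prems(2) show ?thesis
    proof (cases rule: first_step_above)
      case (skip q1)
      then obtain H' where H': "hill_path E q1 (Top \<alpha>) H' q'" "hill_edges H' = es'"
        using less.hyps[of es' \<alpha> q1 q'] less.prems(2,4) Cons by auto
      have "item_path E q (Top \<alpha>) (Flat e) q1" using skip by (simp add: item_flat)
      then show ?thesis using H' Cons by (intro exI[of _ "Flat e # H'"]) (simp add: hill_cons)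
    next
      case (push q1 z)
      have "end_config (\<alpha> @ [z], q1) es' = (\<alpha>, q')" using less.prems(4) push(3) Cons by simp
      then have "\<not> stays_above (\<alpha> @ [z]) (\<alpha> @ [z], q1) es'"
        using end_config_in_run[of "(\<alpha> @ [z], q1)" es'] not_prefix_snoc_self by fastforce
      with push(4,5) obtain es1 p' q2 es2 where M: "es' = es1 @ ((p', z), (q2, Pop)) # es2"
        "((p', z), (q2, Pop)) \<in> E" "valid_run E (\<alpha> @ [z], q1) es1"
        "stays_above (\<alpha> @ [z]) (\<alpha> @ [z], q1) es1" "end_config (\<alpha> @ [z], q1) es1 = (\<alpha> @ [z], p')"
        "valid_run E (\<alpha>, q2) es2" "stays_above \<alpha> (\<alpha>, q2) es2"
        "end_config (\<alpha> @ [z], q1) es' = end_config (\<alpha>, q2) es2"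
        by (rule matched_push)
      obtain H1 where H1: "hill_path E q1 z H1 p'" "hill_edges H1 = es1"
        using less.hyps[of es1 "\<alpha> @ [z]" q1 p'] M(1,3-5) Cons by (auto simp: Top_def)
      obtain H2 where H2: "hill_path E q2 (Top \<alpha>) H2 q'" "hill_edges H2 = es2"
        using less.hyps[of es2 \<alpha> q2 q'] M(1,6-8) less.prems(2) Cons
          \<open>end_config (\<alpha> @ [z], q1) es' = (\<alpha>, q')\<close> by auto
      have "item_path E q (Top \<alpha>) (Bracket e H1 ((p', z), (q2, Pop))) q2"
        using push(1,2) H1(1) M(2) by (simp add: item_bracket)
      then show ?thesis using H1(2) H2 M(1) Cons
        by (intro exI[of _ "Bracket e H1 ((p', z), (q2, Pop)) # H2"]) (simp add: hill_cons)
    qed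
  qed
qed

lemma parse_climb:
  "valid_run E (\<alpha>, q) es \<Longrightarrow> \<alpha> \<noteq> [] \<Longrightarrow> stays_above \<alpha> (\<alpha>, q) es \<Longrightarrow>
   \<exists>D. climb_path E q (Top \<alpha>) D (snd (end_config (\<alpha>, q) es)) (Top (fst (end_config (\<alpha>, q) es)))
     \<and> climb_edges D = es"
proof (induction "length es" arbitrary: \<alpha> q es rule: less_induct)
  case less
  show ?case
  proof (cases es)
    case Nil
    then show ?thesis by (intro exI[of _ "[]"]) (simp add: climb_nil)
  next
    case (Cons e es')
    from less.prems(1,3)[unfolded Cons] less.prems(2) show ?thesis
    proof (cases rule: first_step_above)
      case (skip q1)
      then obtain D' where D': "climb_path E q1 (Top \<alpha>) D' (snd (end_config (\<alpha>, q) es))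
          (Top (fst (end_config (\<alpha>, q) es)))" "climb_edges D' = es'"
        using less.hyps[of es' \<alpha> q1] less.prems(2) Cons by auto
      have "item_path E q (Top \<alpha>) (Flat e) q1" using skip by (simp add: item_flat)
      then show ?thesis using D' Cons by (intro exI[of _ "Closed (Flat e) # D'"]) (simp add: climb_closed)
    next
      case (push q1 z)
      have en: "end_config (\<alpha>, q) es = end_config (\<alpha> @ [z], q1) es'" using push(3) Cons by simp
      show ?thesis
      proof (cases "stays_above (\<alpha> @ [z]) (\<alpha> @ [z], q1) es'")
        case True
        then obtain D' where D': "climb_path E q1 z D' (snd (end_config (\<alpha>, q) es))
            (Top (fst (end_config (\<alpha>, q) es)))" "climb_edges D' = es'"
          using less.hyps[of es' "\<alpha> @ [z]" q1] push(4) en Cons by (auto simp: Top_def)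
        then show ?thesis using push(1,2) Cons by (intro exI[of _ "Open e # D'"]) (simp add: climb_open)
      next
        case False
        with push(4,5) obtain es1 p' q2 es2 where M: "es' = es1 @ ((p', z), (q2, Pop)) # es2"
          "((p', z), (q2, Pop)) \<in> E" "valid_run E (\<alpha> @ [z], q1) es1"
          "stays_above (\<alpha> @ [z]) (\<alpha> @ [z], q1) es1" "end_config (\<alpha> @ [z], q1) es1 = (\<alpha> @ [z], p')"
          "valid_run E (\<alpha>, q2) es2" "stays_above \<alpha> (\<alpha>, q2) es2"
          "end_config (\<alpha> @ [z], q1) es' = end_config (\<alpha>, q2) es2"
          by (rule matched_push)
        obtain H1 where H1: "hill_path E q1 z H1 p'" "hill_edges H1 = es1"
          using parse_hill[OF M(3) _ M(4,5)] by (auto simp: Top_def)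
        obtain D2 where D2: "climb_path E q2 (Top \<alpha>) D2 (snd (end_config (\<alpha>, q) es))
            (Top (fst (end_config (\<alpha>, q) es)))" "climb_edges D2 = es2"
          using less.hyps[of es2 \<alpha> q2] M(1,6-8) less.prems(2) en Cons by auto
        have "item_path E q (Top \<alpha>) (Bracket e H1 ((p', z), (q2, Pop))) q2"
          using push(1,2) H1(1) M(2) by (simp add: item_bracket)
        then show ?thesis using H1(2) D2 M(1) Cons
          by (intro exI[of _ "Closed (Bracket e H1 ((p', z), (q2, Pop))) # D2"]) (simp add: climb_closed)
      qed
    qed
  qed
qed

section \<open>Pumping\<close>

text \<open>An object x (satisfying V, with edge list ed x) is pumpable with bound B if some
  nonempty multiset MP of at most B edges can be removed from it or repeated any number of
  times: there is a family F of objects satisfying V with edge multisets M0 + m \<cdot> MP, and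
  x corresponds to m = 1.\<close>
definition pumpable :: "('a \<Rightarrow> bool) \<Rightarrow> ('a \<Rightarrow> ('q, 'g) edge list) \<Rightarrow> nat \<Rightarrow> 'a \<Rightarrow> bool" where
  "pumpable V ed B x \<longleftrightarrow> (\<exists>F M0 MP. (\<forall>m. V (F m) \<and> mset (ed (F m)) = M0 + repeat_mset m MP)
      \<and> mset (ed x) = M0 + MP \<and> 0 < size MP \<and> size MP \<le> B)"

lemma pumpable_mono: "pumpable V ed B1 x \<Longrightarrow> B1 \<le> B2 \<Longrightarrow> pumpable V ed B2 x"
  unfolding pumpable_def by (meson le_trans)

lemma pumpable_lift:
  assumes "pumpable V ed B x" "\<And>y. V y \<Longrightarrow> V' (f y)" "\<And>y. mset (ed' (f y)) = C + mset (ed y)"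
  shows "pumpable V' ed' B (f x)"
proof -
  from assms(1) obtain F M0 MP where P: "\<forall>m. V (F m) \<and> mset (ed (F m)) = M0 + repeat_mset m MP"
    "mset (ed x) = M0 + MP" "0 < size MP" "size MP \<le> B" unfolding pumpable_def by blast
  show ?thesis unfolding pumpable_def
    using P assms(2,3) by (intro exI[of _ "\<lambda>m. f (F m)"] exI[of _ "C + M0"] exI[of _ MP]) (simp add: add.assoc)
qed

text \<open>If a context f preserves V and adds a nonempty multiset C of at most B edges, then
  f y is pumpable: iterating f gives the pumping family.\<close>
lemma pumpable_iterate:
  assumes "V y" "\<And>y'. V y' \<Longrightarrow> V (f y')" "\<And>y'. mset (ed (f y')) = C + mset (ed y')"
    and "0 < size C" "size C \<le> B"
  shows "pumpable V ed B (f y)"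
proof -
  have iter: "V ((f ^^ m) y) \<and> mset (ed ((f ^^ m) y)) = mset (ed y) + repeat_mset m C" for m
    by (induction m) (simp_all add: assms(1,2,3) add_ac)
  show ?thesis unfolding pumpable_def
    using iter assms(3-5) by (intro exI[of _ "\<lambda>m. (f ^^ m) y"] exI[of _ "mset (ed y)"] exI[of _ C]) (simp add: add_ac)
qed

lemma pigeonhole_pair:
  assumes "finite S" "\<forall>i\<le>n. f i \<in> S" "card S \<le> n"
  shows "\<exists>i j. i < j \<and> j \<le> n \<and> f i = f j"
proof -
  have "f ` {0..n} \<subseteq> S" using assms(2) by auto
  then have "card (f ` {0..n}) \<le> card S" using assms(1) by (rule card_mono[rotated])
  then have "card (f ` {0..n}) < card {0..n}" using assms(3) by simp
  then have "\<not> inj_on f {0..n}" by (rule pigeonhole)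
  then obtain i j where "i \<le> n" "j \<le> n" "i \<noteq> j" "f i = f j" unfolding inj_on_def by auto
  then show ?thesis by (metis nat_neq_iff)
qed

lemma length_concat_map_le:
  "\<forall>x\<in>set ys. length (f x) \<le> c \<Longrightarrow> length (concat (map f ys)) \<le> length ys * c"
  by (induction ys) auto

text \<open>A sequence of more than card S elements revisits a state,
  giving a loop of at most card S elements.\<close>
lemma long_path_loop:
  fixes P :: "'s \<Rightarrow> 'x list \<Rightarrow> 's \<Rightarrow> bool"
  assumes append: "\<And>s A B s'. P s (A @ B) s' \<longleftrightarrow> (\<exists>s1. P s A s1 \<and> P s1 B s')"
    and source: "\<And>s x xs s'. P s (x # xs) s' \<Longrightarrow> src x = s \<and> s \<in> S"
    and S: "finite S" "card S \<le> n"
    and path: "P s0 xs s'" and long: "n < length xs"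
  obtains A M Z s where "xs = A @ M @ Z" "P s0 A s" "P s M s" "P s Z s'" "M \<noteq> []" "length M \<le> n"
proof -
  have split: "P s0 (take i xs) (src (xs ! i)) \<and> P (src (xs ! i)) (drop i xs) s' \<and> src (xs ! i) \<in> S"
    if "i < length xs" for i
  proof -
    obtain s where s: "P s0 (take i xs) s" "P s (drop i xs) s'"
      using path append[of s0 "take i xs" "drop i xs" s'] by auto
    moreover have "drop i xs = xs ! i # drop (Suc i) xs" using that by (simp add: Cons_nth_drop_Suc)
    ultimately show ?thesis using source by metis
  qed
  obtain i j where ij: "i < j" "j \<le> n" "src (xs ! i) = src (xs ! j)"
    using pigeonhole_pair[of S n "\<lambda>i. src (xs ! i)"] split long S by auto
  define s where "s = src (xs ! i)"
  define M where "M = take (j - i) (drop i xs)"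
  have jl: "j < length xs" using ij long by simp
  have di: "drop i xs = M @ drop j xs" unfolding M_def
    by (metis append_take_drop_id drop_drop ij(1) le_add_diff_inverse2 less_imp_le_nat)
  have "P s0 (take i xs) s" and post: "P s (drop j xs) s'"
    using split[of i] split[of j] jl ij unfolding s_def by auto
  moreover have "P s M s"
  proof -
    obtain s1 where s1: "P s M s1" "P s1 (drop j xs) s'"
      using split[of i] jl ij(1) append unfolding di s_def by auto
    have "drop j xs = xs ! j # drop (Suc j) xs" using jl by (simp add: Cons_nth_drop_Suc)
    then show ?thesis using s1 source ij(3) unfolding s_def by metis
  qed
  moreover have "xs = take i xs @ M @ drop j xs" using di by (metis append_take_drop_id)
  moreover have "M \<noteq> []" "length M \<le> n" using ij jl unfolding M_def by auto
  ultimately show thesis using that by blast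
qed

lemma path_loop_pumpable:
  fixes P :: "'s \<Rightarrow> 'x list \<Rightarrow> 's \<Rightarrow> bool" and ed :: "'x \<Rightarrow> ('q, 'g) edge list"
  assumes append: "\<And>s A B s'. P s (A @ B) s' \<longleftrightarrow> (\<exists>s1. P s A s1 \<and> P s1 B s')"
    and nil: "\<And>s s'. P s [] s' \<longleftrightarrow> s' = s"
    and loop: "xs = A @ M @ Z" "P s0 A s" "P s M s" "P s Z s'" "M \<noteq> []" "length M \<le> n"
    and ne: "\<And>x. ed x \<noteq> []" and bnd: "\<forall>x\<in>set xs. length (ed x) \<le> c"
  shows "pumpable (\<lambda>ys. P s0 ys s') (\<lambda>ys. concat (map ed ys)) (n * c) xs"
proof -
  have iterated: "P s (concat (replicate m M)) s" for m
    by (induction m) (use loop(3) in \<open>auto simp: append nil\<close>)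
  have family: "P s0 (A @ concat (replicate m M) @ Z) s'" for m
    unfolding append using loop(2,4) iterated by blast
  have family_edges: "mset (concat (map ed (A @ concat (replicate m M) @ Z))) =
      (mset (concat (map ed A)) + mset (concat (map ed Z))) + repeat_mset m (mset (concat (map ed M)))" for m
    by (induction m) (simp_all add: add_ac)
  have "\<forall>x\<in>set M. length (ed x) \<le> c" using bnd loop(1) by simp
  then have "length (concat (map ed M)) \<le> length M * c" by (rule length_concat_map_le)
  also have "\<dots> \<le> n * c" using loop(6) by (rule mult_le_mono1)
  finally have small: "length (concat (map ed M)) \<le> n * c" .
  have nonempty: "0 < length (concat (map ed M))" using loop(5) ne by (cases M) auto
  show ?thesis unfolding pumpable_def
    by (intro exI[of _ "\<lambda>m. A @ concat (replicate m M) @ Z"]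
        exI[of _ "mset (concat (map ed A)) + mset (concat (map ed Z))"]
        exI[of _ "mset (concat (map ed M))"] conjI allI family family_edges)
      (use small nonempty loop(1) in \<open>simp_all add: add_ac\<close>)
qed

lemma long_path_pumpable:
  fixes P :: "'s \<Rightarrow> 'x list \<Rightarrow> 's \<Rightarrow> bool" and ed :: "'x \<Rightarrow> ('q, 'g) edge list"
  assumes append: "\<And>s A B s'. P s (A @ B) s' \<longleftrightarrow> (\<exists>s1. P s A s1 \<and> P s1 B s')"
    and nil: "\<And>s s'. P s [] s' \<longleftrightarrow> s' = s"
    and source: "\<And>s x xs s'. P s (x # xs) s' \<Longrightarrow> src x = s \<and> s \<in> S"
    and S: "finite S" "card S \<le> n"
    and path: "P s0 xs s'" and long: "n < length xs"
    and ne: "\<And>x. ed x \<noteq> []" and bnd: "\<forall>x\<in>set xs. length (ed x) \<le> c"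
  shows "pumpable (\<lambda>ys. P s0 ys s') (\<lambda>ys. concat (map ed ys)) (n * c) xs"
proof -
  from append source S path long obtain A M Z s where
    "xs = A @ M @ Z" "P s0 A s" "P s M s" "P s Z s'" "M \<noteq> []" "length M \<le> n"
    by (rule long_path_loop)
  from append nil this ne bnd show ?thesis by (rule path_loop_pumpable)
qed

lemma item_edges_ne: "item_edges x \<noteq> []"
  by (cases x) auto

lemma citem_edges_ne: "citem_edges x \<noteq> []"
  by (cases x) (auto simp: item_edges_ne)

fun item_src :: "('q, 'g) item \<Rightarrow> 'q \<times> 'g" where
  "item_src (Flat e) = fst e"
| "item_src (Bracket e1 H e2) = fst e1"

fun citem_src :: "('q, 'g) citem \<Rightarrow> 'q \<times> 'g" where
  "citem_src (Closed x) = item_src x"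
| "citem_src (Open e) = fst e"

lemma item_path_src: "item_path E q g x q' \<Longrightarrow> item_src x = (q, g) \<and> (\<exists>r. (item_src x, r) \<in> E)"
  by (induction rule: item_path.cases) auto

lemma climb_path_Cons_src:
  "climb_path E q g (c # D) q' g' \<Longrightarrow> citem_src c = (q, g) \<and> (\<exists>r. (citem_src c, r) \<in> E)"
proof (cases c)
  case (Closed x)
  assume "climb_path E q g (c # D) q' g'"
  then obtain q1 where "item_path E q g x q1" using Closed by (auto simp: climb_path_Closed)
  from item_path_src[OF this] show ?thesis using Closed by (simp only: citem_src.simps) metis
next
  case (Open e)
  assume "climb_path E q g (c # D) q' g'"
  then obtain p z where "e = ((q, g), p, Push z)" "e \<in> E" using Open by (auto simp: climb_path_Open)
  then show ?thesis using Open by auto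
qed

lemma hill_context:
  "hill_path E q g (A @ x # B') q' \<Longrightarrow>
   \<exists>s s1. item_path E s g x s1 \<and> (\<forall>y. item_path E s g y s1 \<longrightarrow> hill_path E q g (A @ y # B') q')"
  by (auto simp: hill_path_append hill_path_Cons intro: hill_cons)

lemma climb_context:
  assumes "climb_path E q g (A @ Closed x # B') q' g'"
  shows "\<exists>s t s1. item_path E s t x s1 \<and> (\<forall>y. item_path E s t y s1 \<longrightarrow> climb_path E q g (A @ Closed y # B') q' g')"
proof -
  from assms obtain s t s1 where "climb_path E q g A s t" "item_path E s t x s1" "climb_path E s1 t B' q' g'"
    by (auto simp: climb_path_append climb_path_Closed)
  moreover have "climb_path E q g (A @ Closed y # B') q' g'" if "item_path E s t y s1" for y
    unfolding climb_path_append using calculation(1) climb_closed[OF that calculation(3)] by blast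
  ultimately show ?thesis by blast
qed

text \<open>The
  number of distinct keys inside an item bounds its nesting depth unless two nested
  brackets share a key, in which case the outer one can be pumped.\<close>
fun item_keys :: "('q, 'g) item \<Rightarrow> ('q \<times> 'g \<times> 'q) set" where
  "item_keys (Flat e) = {}"
| "item_keys (Bracket e1 H e2) = insert (fst (fst e1), snd (fst e1), fst (snd e2)) (\<Union>x\<in>set H. item_keys x)"

abbreviation hill_keys :: "('q, 'g) item list \<Rightarrow> ('q \<times> 'g \<times> 'q) set" where
  "hill_keys H \<equiv> \<Union>x\<in>set H. item_keys x"

lemma nested_key_context:
  "item_path E a b x a' \<Longrightarrow> (k1, k2, k3) \<in> item_keys x \<Longrightarrow> \<exists>y f C. item_path E k1 k2 y k3 \<and> 2 \<le> length (item_edges y) \<and> x = f y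
     \<and> (\<forall>y'. item_path E k1 k2 y' k3 \<longrightarrow> item_path E a b (f y') a') \<and> (\<forall>y'. mset (item_edges (f y')) = C + mset (item_edges y'))"
  "hill_path E a b H a' \<Longrightarrow> (k1, k2, k3) \<in> hill_keys H \<Longrightarrow> \<exists>y f C. item_path E k1 k2 y k3 \<and> 2 \<le> length (item_edges y) \<and> H = f y
     \<and> (\<forall>y'. item_path E k1 k2 y' k3 \<longrightarrow> hill_path E a b (f y') a') \<and> (\<forall>y'. mset (hill_edges (f y')) = C + mset (item_edges y'))"
proof (induction rule: item_path_hill_path.inducts)
  case (item_flat q g q')
  then show ?case by simp
next
  case (item_bracket q g p z H p' q')
  let ?x = "Bracket ((q, g), p, Push z) H ((p', z), q', Pop)"
  show ?case
  proof (cases "(k1, k2, k3) = (q, g, q')")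
    case True
    have v: "item_path E q g ?x q'" using item_bracket(1,2,4) by (rule item_path_hill_path.item_bracket)
    show ?thesis
      using True v by (intro exI[of _ ?x] exI[of _ id] exI[of _ "{#}"]) simp
  next
    case False
    then have "(k1, k2, k3) \<in> hill_keys H" using item_bracket.prems by auto
    from item_bracket(3)[OF this] obtain y f C where Y: "item_path E k1 k2 y k3" "2 \<le> length (item_edges y)" "H = f y"
      "\<forall>y'. item_path E k1 k2 y' k3 \<longrightarrow> hill_path E p z (f y') p'" "\<forall>y'. mset (hill_edges (f y')) = C + mset (item_edges y')"
      by blast
    show ?thesis
      using Y item_bracket(1,4)
      by (intro exI[of _ y] exI[of _ "\<lambda>r. Bracket ((q, g), p, Push z) (f r) ((p', z), q', Pop)"]
          exI[of _ "C + {#((q, g), p, Push z), ((p', z), q', Pop)#}"])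
        (auto intro: item_path_hill_path.item_bracket simp: add_ac)
  qed
next
  case (hill_nil q g)
  then show ?case by simp
next
  case (hill_cons q g x q1 H q')
  show ?case
  proof (cases "(k1, k2, k3) \<in> item_keys x")
    case True
    from hill_cons(2)[OF True] obtain y f C where Y: "item_path E k1 k2 y k3" "2 \<le> length (item_edges y)" "x = f y"
      "\<forall>y'. item_path E k1 k2 y' k3 \<longrightarrow> item_path E q g (f y') q1" "\<forall>y'. mset (item_edges (f y')) = C + mset (item_edges y')"
      by blast
    show ?thesis
      using Y hill_cons(3)
      by (intro exI[of _ y] exI[of _ "\<lambda>r. f r # H"] exI[of _ "C + mset (hill_edges H)"])
        (auto intro: item_path_hill_path.hill_cons simp: add_ac)
  next
    case False
    then have "(k1, k2, k3) \<in> hill_keys H" using hill_cons.prems by simp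
    from hill_cons(4)[OF this] obtain y f C where Y: "item_path E k1 k2 y k3" "2 \<le> length (item_edges y)" "H = f y"
      "\<forall>y'. item_path E k1 k2 y' k3 \<longrightarrow> hill_path E q1 g (f y') q'" "\<forall>y'. mset (hill_edges (f y')) = C + mset (item_edges y')"
      by blast
    show ?thesis
      using Y hill_cons(1)
      by (intro exI[of _ y] exI[of _ "\<lambda>r. x # f r"] exI[of _ "mset (item_edges x) + C"])
        (auto intro: item_path_hill_path.hill_cons simp: add_ac)
  qed
qed

text \<open>item_bound n k bounds the length of an item with k distinct keys that is not pumpable,
  when hills of more than n items are pumpable.\<close>
fun item_bound :: "nat \<Rightarrow> nat \<Rightarrow> nat" where
  "item_bound n 0 = 1"
| "item_bound n (Suc k) = n * item_bound n k + 2"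

lemma item_bound_pos: "1 \<le> item_bound n k"
  by (induction k) auto

lemma item_bound_mono:
  assumes "1 \<le> n" "k \<le> k'"
  shows "item_bound n k \<le> item_bound n k'"
proof (rule lift_Suc_mono_le[of "item_bound n", OF _ assms(2)])
  fix j
  have "1 * item_bound n j \<le> n * item_bound n j" by (rule mult_le_mono1[OF assms(1)])
  then show "item_bound n j \<le> item_bound n (Suc j)" unfolding item_bound.simps by linarith
qed

lemma item_bound_le: "item_bound n k \<le> (n + 2) ^ k"
proof (induction k)
  case 0 then show ?case by simp
next
  case (Suc k)
  have "item_bound n (Suc k) \<le> n * (n + 2) ^ k + 2" using Suc by simp
  also have "\<dots> \<le> n * (n + 2) ^ k + 2 * (n + 2) ^ k" by simp
  also have "\<dots> = (n + 2) ^ Suc k" by (simp add: algebra_simps)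
  finally show ?case .
qed

locale pds =
  fixes Q :: "'q set" and \<Gamma> :: "'g set" and bt :: 'g and q0 :: 'q and E :: "('q, 'g) edge set"
  assumes wps: "wps Q \<Gamma> bt q0 E"
begin

text \<open>KS
  contains all possible keys of brackets; it is empty if no symbol other than the bottom
  exists, since then nothing can be pushed.  B is the pumping bound for climbs.\<close>
definition "N = card Q"
definition "L = card \<Gamma> * card Q"
definition "KS = Q \<times> {g\<in>\<Gamma>. 2 \<le> card \<Gamma>} \<times> Q"
definition "K0 = card KS"
definition "B = L * item_bound N K0"

lemma finQ: "finite Q" and finG: "finite \<Gamma>" and btG: "bt \<in> \<Gamma>" and q0Q: "q0 \<in> Q"
  using wps by (auto simp: wps_def)

lemma N_pos: "1 \<le> N"
  using finQ q0Q unfolding N_def by (metis One_nat_def Suc_leI card_gt_0_iff empty_iff)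

lemma G_pos: "1 \<le> card \<Gamma>"
  using finG btG by (metis One_nat_def Suc_leI card_gt_0_iff empty_iff)

lemma N_le_L: "N \<le> L"
  unfolding N_def L_def using G_pos by simp

lemma B_ge: "N * item_bound N K0 \<le> B"
  unfolding B_def using N_le_L by simp

lemma finKS: "finite KS"
  unfolding KS_def using finQ finG by simp

lemma edge_wf:
  "((q, g), (q', c)) \<in> E \<Longrightarrow> q \<in> Q \<and> g \<in> \<Gamma> \<and> q' \<in> Q \<and> (\<forall>z. c = Push z \<longrightarrow> z \<in> \<Gamma> \<and> z \<noteq> bt)"
  using wps unfolding wps_def by blast

lemma keys_subset:
  "item_path E q g x q' \<Longrightarrow> item_keys x \<subseteq> KS"
  "hill_path E q g H q' \<Longrightarrow> hill_keys H \<subseteq> KS"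
proof (induction rule: item_path_hill_path.inducts)
  case (item_flat q g q')
  then show ?case by simp
next
  case (item_bracket q g p z H p' q')
  have e1: "q \<in> Q" "g \<in> \<Gamma>" "z \<in> \<Gamma>" "z \<noteq> bt" using edge_wf[OF item_bracket(1)] by auto
  have e2: "q' \<in> Q" using edge_wf[OF item_bracket(4)] by auto
  have "{z, bt} \<subseteq> \<Gamma>" using e1 btG by auto
  then have "card {z, bt} \<le> card \<Gamma>" using finG by (rule card_mono[rotated])
  then have "2 \<le> card \<Gamma>" using e1(4) by simp
  then have "(q, g, q') \<in> KS" unfolding KS_def using e1 e2 by simp
  then show ?case using item_bracket(3) by simp
next
  case (hill_nil q g)
  then show ?case by simp
next
  case (hill_cons q g x q1 H q')
  then show ?case by simp
qed

lemma card_item_keys: "item_path E q g x q' \<Longrightarrow> card (item_keys x) \<le> K0"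
  unfolding K0_def using keys_subset(1) finKS by (rule card_mono[rotated])

lemma card_hill_keys: "hill_path E q g H q' \<Longrightarrow> card (hill_keys H) \<le> K0"
  unfolding K0_def using keys_subset(2) finKS by (rule card_mono[rotated])

text \<open>A hill of more than N items revisits a state between two items.\<close>
lemma long_hill_pumpable:
  assumes "hill_path E q g H q'" "N < length H" "\<forall>x\<in>set H. length (item_edges x) \<le> c"
  shows "pumpable (\<lambda>y. hill_path E q g y q') hill_edges (N * c) H"
proof (rule long_path_pumpable[where P = "\<lambda>s H s'. hill_path E s g H s'" and src = "\<lambda>x. fst (item_src x)"
      and S = Q and n = N])
  fix s x xs s'
  assume "hill_path E s g (x # xs) s'"
  then obtain s1 where "item_path E s g x s1" by (auto simp: hill_path_Cons)
  from item_path_src[OF this] show "fst (item_src x) = s \<and> s \<in> Q" using edge_wf by fastforce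
qed (use assms finQ in \<open>simp_all add: N_def hill_path_append hill_path_Nil item_edges_ne\<close>)

text \<open>A climb of more than L items revisits a pair of state and top symbol.\<close>
lemma long_climb_pumpable:
  assumes "climb_path E q g D q' g'" "L < length D" "\<forall>x\<in>set D. length (citem_edges x) \<le> c"
  shows "pumpable (\<lambda>y. climb_path E q g y q' g') climb_edges (L * c) D"
proof -
  let ?P = "\<lambda>(s, t) D (s', t'). climb_path E s t D s' t'"
  have "pumpable (\<lambda>y. ?P (q, g) y (q', g')) climb_edges (L * c) D"
  proof (rule long_path_pumpable[where src = citem_src and S = "Q \<times> \<Gamma>" and n = L])
    fix s x xs s'
    assume "?P s (x # xs) s'"
    moreover obtain a b a' b' where "s = (a, b)" "s' = (a', b')" by fastforce
    ultimately have "climb_path E a b (x # xs) a' b'" by simp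
    from climb_path_Cons_src[OF this] obtain r where "citem_src x = (a, b)" "((a, b), r) \<in> E"
      by auto
    then show "citem_src x = s \<and> s \<in> Q \<times> \<Gamma>"
      using edge_wf[of a b "fst r" "snd r"] \<open>s = (a, b)\<close> by simp
  next
    show "\<And>s A B s'. ?P s (A @ B) s' \<longleftrightarrow> (\<exists>s1. ?P s A s1 \<and> ?P s1 B s')"
      by (simp add: climb_path_append split_paired_Ex split: prod.split)
    show "\<And>s s'. ?P s [] s' \<longleftrightarrow> s' = s" by (auto simp: climb_path_Nil)
  qed (use assms finQ finG in \<open>simp_all add: L_def card_cartesian_product citem_edges_ne\<close>)
  then show ?thesis by simp
qed

lemma hill_pumpable_or_short:
  assumes V: "hill_path E q g H q'"
    and items: "\<And>x a b a'. x \<in> set H \<Longrightarrow> item_path E a b x a' \<Longrightarrow>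
        pumpable (\<lambda>y. item_path E a b y a') item_edges B x \<or> length (item_edges x) \<le> item_bound N (card (item_keys x))"
  shows "pumpable (\<lambda>y. hill_path E q g y q') hill_edges B H \<or> length (hill_edges H) \<le> N * item_bound N (card (hill_keys H))"
proof (cases "pumpable (\<lambda>y. hill_path E q g y q') hill_edges B H")
  case False
  note np = this
  have fin: "finite (hill_keys H)" using keys_subset(2)[OF V] finKS by (rule finite_subset)
  have bnd: "\<forall>x\<in>set H. length (item_edges x) \<le> item_bound N (card (hill_keys H))"
  proof
    fix x assume xH: "x \<in> set H"
    then obtain A B' where H: "H = A @ x # B'" by (metis split_list)
    from hill_context[OF V[unfolded H]] obtain s s1 where S: "item_path E s g x s1"
      "\<forall>y. item_path E s g y s1 \<longrightarrow> hill_path E q g (A @ y # B') q'" by blast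
    have "\<not> pumpable (\<lambda>y. item_path E s g y s1) item_edges B x"
    proof
      assume "pumpable (\<lambda>y. item_path E s g y s1) item_edges B x"
      then have "pumpable (\<lambda>y. hill_path E q g y q') hill_edges B (A @ x # B')"
        by (rule pumpable_lift[where f = "\<lambda>y. A @ y # B'" and C = "mset (hill_edges A) + mset (hill_edges B')"])
          (simp_all add: S(2) add_ac)
      then show False using np H by simp
    qed
    then have "length (item_edges x) \<le> item_bound N (card (item_keys x))" using items[OF xH S(1)] by blast
    also have "\<dots> \<le> item_bound N (card (hill_keys H))"
      using xH fin by (intro item_bound_mono[OF N_pos] card_mono) auto
    finally show "length (item_edges x) \<le> item_bound N (card (hill_keys H))" .
  qed
  have "\<not> N < length H"
  proof
    assume "N < length H"
    then have "pumpable (\<lambda>y. hill_path E q g y q') hill_edges (N * item_bound N (card (hill_keys H))) H"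
      using long_hill_pumpable[OF V _ bnd] by simp
    moreover have "N * item_bound N (card (hill_keys H)) \<le> B"
      using mult_le_mono2[OF item_bound_mono[OF N_pos card_hill_keys[OF V]], of N] B_ge by linarith
    ultimately have "pumpable (\<lambda>y. hill_path E q g y q') hill_edges B H" by (rule pumpable_mono)
    then show False using np by contradiction
  qed
  then have "length H * item_bound N (card (hill_keys H)) \<le> N * item_bound N (card (hill_keys H))"
    by (simp add: mult_le_mono1)
  with length_concat_map_le[OF bnd]
  have "length (hill_edges H) \<le> N * item_bound N (card (hill_keys H))" by (rule le_trans)
  then show ?thesis ..
qed simp

text \<open>Every item is pumpable or short; by induction on the item, using that a bracket whose
  key reappears inside it can be iterated.\<close>
lemma item_pumpable_or_short:
  "item_path E q g x q' \<Longrightarrow>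
   pumpable (\<lambda>y. item_path E q g y q') item_edges B x \<or> length (item_edges x) \<le> item_bound N (card (item_keys x))"
proof (induction x arbitrary: q g q')
  case (Flat e)
  then show ?case by simp
next
  case (Bracket e1 H e2)
  from Bracket.prems obtain p z p' where X: "e1 = ((q, g), (p, Push z))" "e1 \<in> E" "hill_path E p z H p'"
    "e2 = ((p', z), (q', Pop))" "e2 \<in> E"
    by (cases rule: item_path.cases) auto
  have bracket: "item_path E q g (Bracket e1 H' e2) q'" if "hill_path E p z H' p'" for H'
    using item_bracket[of q g p z E H' p' q'] X that by simp
  show ?case
  proof (cases "pumpable (\<lambda>y. hill_path E p z y p') hill_edges B H")
    case True
    then have "pumpable (\<lambda>y. item_path E q g y q') item_edges B (Bracket e1 H e2)"
      by (rule pumpable_lift[where f = "\<lambda>H'. Bracket e1 H' e2" and C = "{#e1, e2#}"])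
        (simp_all add: bracket add_ac)
    then show ?thesis ..
  next
    case False
    then have short: "length (hill_edges H) \<le> N * item_bound N (card (hill_keys H))"
      using hill_pumpable_or_short[OF X(3) Bracket.IH] by blast
    have key: "item_keys (Bracket e1 H e2) = insert (q, g, q') (hill_keys H)" using X by simp
    show ?thesis
    proof (cases "(q, g, q') \<in> hill_keys H")
      case False
      have fin: "finite (hill_keys H)" using keys_subset(2)[OF X(3)] finKS by (rule finite_subset)
      have "length (item_edges (Bracket e1 H e2)) = length (hill_edges H) + 2" by simp
      also have "\<dots> \<le> N * item_bound N (card (hill_keys H)) + 2" using short by simp
      also have "\<dots> = item_bound N (card (item_keys (Bracket e1 H e2)))" unfolding key using fin False by simp
      finally show ?thesis ..
    next
      case True
      from nested_key_context(2)[OF X(3) True] obtain y f C where Y: "item_path E q g y q'"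
        "2 \<le> length (item_edges y)" "H = f y" "\<forall>y'. item_path E q g y' q' \<longrightarrow> hill_path E p z (f y') p'"
        "\<forall>y'. mset (hill_edges (f y')) = C + mset (item_edges y')"
        by blast
      have "size C + 2 \<le> length (hill_edges H)" using Y(2,3,5) by (metis add_le_cancel_left size_mset size_union)
      also have "\<dots> \<le> N * item_bound N K0"
        using short mult_le_mono2[OF item_bound_mono[OF N_pos card_hill_keys[OF X(3)]], of N] by linarith
      finally have "size (C + {#e1, e2#}) \<le> B" using B_ge by simp
      then have "pumpable (\<lambda>y. item_path E q g y q') item_edges B ((\<lambda>y. Bracket e1 (f y) e2) y)"
        by (intro pumpable_iterate[where C = "C + {#e1, e2#}"]) (simp_all add: Y(1,4,5) bracket add_ac)
      then show ?thesis using Y(3) by simp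
    qed
  qed
qed

lemma climb_pumpable_or_short:
  assumes V: "climb_path E q g D q' g'"
  shows "pumpable (\<lambda>y. climb_path E q g y q' g') climb_edges B D \<or> length (climb_edges D) \<le> B"
proof (cases "pumpable (\<lambda>y. climb_path E q g y q' g') climb_edges B D")
  case False
  note np = this
  have bnd: "\<forall>c\<in>set D. length (citem_edges c) \<le> item_bound N K0"
  proof
    fix c assume "c \<in> set D"
    then obtain A B' where D: "D = A @ c # B'" by (metis split_list)
    show "length (citem_edges c) \<le> item_bound N K0"
    proof (cases c)
      case (Open e)
      then show ?thesis using item_bound_pos[of N K0] by simp
    next
      case (Closed x)
      from climb_context[OF V[unfolded D Closed]] obtain s t s1 where S: "item_path E s t x s1"
        "\<forall>y. item_path E s t y s1 \<longrightarrow> climb_path E q g (A @ Closed y # B') q' g'" by blast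
      have "\<not> pumpable (\<lambda>y. item_path E s t y s1) item_edges B x"
      proof
        assume "pumpable (\<lambda>y. item_path E s t y s1) item_edges B x"
        then have "pumpable (\<lambda>y. climb_path E q g y q' g') climb_edges B (A @ Closed x # B')"
          by (rule pumpable_lift[where f = "\<lambda>y. A @ Closed y # B'"
                and C = "mset (climb_edges A) + mset (climb_edges B')"]) (simp_all add: S(2) add_ac)
        then show False using np D Closed by simp
      qed
      then have "length (item_edges x) \<le> item_bound N (card (item_keys x))"
        using item_pumpable_or_short[OF S(1)] by blast
      also have "\<dots> \<le> item_bound N K0" by (rule item_bound_mono[OF N_pos card_item_keys[OF S(1)]])
      finally show ?thesis using Closed by simp
    qed
  qed
  have "\<not> L < length D"
  proof
    assume "L < length D"
    then have "pumpable (\<lambda>y. climb_path E q g y q' g') climb_edges B D"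
      using long_climb_pumpable[OF V _ bnd] unfolding B_def by simp
    then show False using np by blast
  qed
  then have "length D * item_bound N K0 \<le> B" unfolding B_def by (simp add: mult_le_mono1)
  with length_concat_map_le[OF bnd] have "length (climb_edges D) \<le> B" by (rule le_trans)
  then show ?thesis ..
qed simp

end

section \<open>Transferring positive weight from w + eps to w + \<delta>\<close>

text \<open>Weight of a multiset of edges under w + r; path weights only depend on this multiset.\<close>
definition mweight :: "(('q, 'g) edge \<Rightarrow> int) \<Rightarrow> rat \<Rightarrow> ('q, 'g) edge multiset \<Rightarrow> rat" where
  "mweight w r M = sum_mset (image_mset (\<lambda>e. of_int (w e) + r) M)"

lemma mweight_add: "mweight w r (A + B) = mweight w r A + mweight w r B"
  by (simp add: mweight_def)

lemma mweight_repeat: "mweight w r (repeat_mset m M) = of_nat m * mweight w r M"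
  by (induction m) (auto simp: mweight_add algebra_simps mweight_def)

lemma mweight_split: "mweight w r M = of_int (sum_mset (image_mset w M)) + r * of_nat (size M)"
  by (induction M) (auto simp: mweight_def algebra_simps)

lemma path_weight_mweight: "path_weight (\<lambda>e. of_int (w e) + r) es = mweight w r (mset es)"
  unfolding path_weight_def mweight_def by (simp add: sum_mset_sum_list[symmetric])

text \<open>The key arithmetic fact: if eps times the number of edges is at most 1, positive
  (w + eps)-weight forces a nonnegative integer weight, hence positive (w + \<delta>)-weight.\<close>
lemma small_positive_transfer:
  fixes eps \<delta> :: rat
  assumes "eps * of_nat (size M) \<le> 1" "0 < mweight w eps M" "0 < \<delta>"
  shows "0 < mweight w \<delta> M"
proof -
  define W where "W = sum_mset (image_mset w M)"
  have "(-1 :: rat) < of_int W" using assms(1,2) mweight_split[of w eps M] unfolding W_def by linarith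
  then have "0 \<le> W" by linarith
  have "M \<noteq> {#}" using assms(2) by (auto simp: mweight_def)
  then have "0 < \<delta> * of_nat (size M)" using assms(3) by (simp add: nonempty_has_size)
  then show ?thesis using mweight_split[of w \<delta> M] \<open>0 \<le> W\<close> unfolding W_def by simp
qed

context pds
begin

lemma B_bound: "B \<le> L ^ ((L + 1)\<^sup>2) * (2 * L)"
proof -
  have L1: "1 \<le> L" unfolding L_def using N_pos G_pos N_def by simp
  have B1: "B \<le> L * (N + 2) ^ K0" unfolding B_def using item_bound_le by simp
  show ?thesis
  proof (cases "2 \<le> card \<Gamma>")
    case False
    then have "KS = {}" unfolding KS_def by auto
    then have "K0 = 0" unfolding K0_def by simp
    then have "B \<le> L" using B1 by simp
    also have "\<dots> \<le> 1 * (2 * L)" by simp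
    also have "\<dots> \<le> L ^ ((L + 1)\<^sup>2) * (2 * L)"
      using L1 by (intro mult_le_mono1) simp
    finally show ?thesis .
  next
    case True
    then have "KS = Q \<times> \<Gamma> \<times> Q" unfolding KS_def by auto
    then have K: "K0 = N * L" unfolding K0_def N_def L_def by (simp add: card_cartesian_product)
    have L2: "2 * N \<le> L" unfolding L_def N_def using True by simp
    then have L2': "2 \<le> L" using N_pos by simp
    have a: "N + 2 \<le> L * L"
    proof -
      have "N + 2 \<le> L + 2" using N_le_L by simp
      also have "\<dots> \<le> L + L" using L2' by simp
      also have "\<dots> \<le> L * L" using L2' by (metis mult_2 mult_le_mono1)
      finally show ?thesis .
    qed
    have "(N + 2) ^ K0 \<le> (L * L) ^ K0" using a by (rule power_mono) simp
    also have "\<dots> = L ^ (2 * K0)" by (simp add: power_mult_distrib mult_2 power_add)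
    also have "\<dots> \<le> L ^ ((L + 1)\<^sup>2)"
    proof (rule power_increasing)
      have "2 * K0 = (2 * N) * L" using K by simp
      also have "\<dots> \<le> L * L" using L2 by simp
      also have "\<dots> \<le> (L + 1)\<^sup>2" by (simp add: power2_eq_square)
      finally show "2 * K0 \<le> (L + 1)\<^sup>2" .
    qed (use L1 in simp)
    finally have "(N + 2) ^ K0 \<le> L ^ ((L + 1)\<^sup>2)" .
    then have "B \<le> L * L ^ ((L + 1)\<^sup>2)" using B1 by (meson le_trans mult_le_mono2)
    also have "\<dots> \<le> L ^ ((L + 1)\<^sup>2) * (2 * L)" by simp
    finally show ?thesis .
  qed
qed

text \<open>A short climb is handled directly; a
  pumpable one is either shortened (if the remainder is still positive) or its positive
  pumpable part is repeated until the (w + \<delta>)-weight becomes positive.\<close>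
lemma positive_cycle_transfer:
  fixes eps \<delta> :: rat
  assumes eps: "0 \<le> eps" "eps * of_nat B \<le> 1" and \<delta>: "0 < \<delta>"
  shows "climb_path E qs gs D qs gs \<Longrightarrow> 0 < mweight w eps (mset (climb_edges D)) \<Longrightarrow>
    \<exists>D'. climb_path E qs gs D' qs gs \<and> 0 < mweight w \<delta> (mset (climb_edges D'))"
proof (induction "length (climb_edges D)" arbitrary: D rule: less_induct)
  case less
  have small: "0 < mweight w \<delta> M" if "size M \<le> B" "0 < mweight w eps M" for M
  proof (rule small_positive_transfer[OF _ that(2) \<delta>])
    have "eps * of_nat (size M) \<le> eps * of_nat B" using that(1) eps(1) by (simp add: mult_left_mono)
    then show "eps * of_nat (size M) \<le> 1" using eps(2) by simp
  qed
  from climb_pumpable_or_short[OF less.prems(1)] show ?case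
  proof
    assume "pumpable (\<lambda>y. climb_path E qs gs y qs gs) climb_edges B D"
    then obtain F M0 MP where F: "\<And>m. climb_path E qs gs (F m) qs gs"
      "\<And>m. mset (climb_edges (F m)) = M0 + repeat_mset m MP"
      and D: "mset (climb_edges D) = M0 + MP" "0 < size MP" "size MP \<le> B"
      unfolding pumpable_def by blast
    show ?thesis
    proof (cases "0 < mweight w eps M0")
      case True
      have "length (climb_edges (F 0)) < length (climb_edges D)"
        using F(2)[of 0] D(1,2) by (metis add.right_neutral add_less_cancel_left repeat_mset_0 size_mset size_union)
      then show ?thesis using less.hyps F True by (metis add.right_neutral repeat_mset_0)
    next
      case False
      then have "0 < mweight w eps MP" using less.prems(2) D(1) mweight_add[of w eps M0 MP] by simp
      then have pos: "0 < mweight w \<delta> MP" using small D(3) by blast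
      obtain m where "- mweight w \<delta> M0 < of_nat m * mweight w \<delta> MP"
        using ex_less_of_nat_mult[OF pos] by blast
      then have "0 < mweight w \<delta> (mset (climb_edges (F m)))" by (simp add: F(2) mweight_add mweight_repeat)
      then show ?thesis using F(1) by blast
    qed
  qed (use small less.prems in auto)
qed

lemma eps_cycle_transfer:
  fixes \<delta> :: rat
  assumes "climb_path E qs gs D qs gs" and "0 < \<delta>"
    and "0 < mweight w (1 / (of_nat ((card \<Gamma> * card Q) ^ ((card \<Gamma> * card Q + 1)\<^sup>2))
                                * (2 * of_nat (card \<Gamma> * card Q)))) (mset (climb_edges D))"
  shows "\<exists>D'. climb_path E qs gs D' qs gs \<and> 0 < mweight w \<delta> (mset (climb_edges D'))"
proof -
  have "(of_nat B :: rat) \<le> of_nat (L ^ ((L + 1)\<^sup>2) * (2 * L))" using B_bound by (simp only: of_nat_le_iff)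
  moreover have "0 < card \<Gamma> * card Q" using N_pos G_pos unfolding N_def by simp
  ultimately have "1 / (of_nat ((card \<Gamma> * card Q) ^ ((card \<Gamma> * card Q + 1)\<^sup>2))
      * (2 * of_nat (card \<Gamma> * card Q))) * of_nat B \<le> (1 :: rat)"
    unfolding L_def by (simp add: field_simps)
  from positive_cycle_transfer[OF _ this assms(2,1,3)] show ?thesis by simp
qed

end

section \<open>Good cycles and cyclic climbs\<close>

text \<open>Starting from the initial stack [bt], every stack is bt followed by symbols other
  than bt, since bt is never pushed or popped; in particular reachable stacks are nonempty.\<close>
lemma valid_run_bottom_marked:
  assumes W: "wps Q \<Gamma> bt q0 E"
  shows "valid_run E c es \<Longrightarrow> (\<exists>r. fst c = bt # r \<and> bt \<notin> set r) \<Longrightarrow>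
    \<forall>c'\<in>set (run c es). \<exists>r. fst c' = bt # r \<and> bt \<notin> set r"
proof (induction es arbitrary: c)
  case Nil
  then show ?case by simp
next
  case (Cons e es)
  obtain r where r: "fst c = bt # r" "bt \<notin> set r" using Cons.prems(2) by blast
  obtain q g q' com where e: "e = ((q, g), (q', com))" by (metis prod.collapse)
  have eE: "e \<in> E" and src: "(q, g) = (snd c, Top (fst c))" and ok: "valid_run E (next_config c e) es"
    using Cons.prems(1) e by auto
  have ed: "\<forall>z. com = Push z \<longrightarrow> z \<noteq> bt" "com = Pop \<longrightarrow> g \<noteq> bt"
    using W eE e unfolding wps_def by blast+
  have "\<exists>r. fst (next_config c e) = bt # r \<and> bt \<notin> set r"
  proof (cases com)
    case Skip
    then show ?thesis using r e by (simp add: next_config_def)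
  next
    case (Push z)
    then show ?thesis using r e ed(1) by (simp add: next_config_def)
  next
    case Pop
    have "g = last (bt # r)" using src r by (simp add: Top_def)
    then have "r \<noteq> []" using ed(2) Pop by auto
    then have "butlast (bt # r) = bt # butlast r" by simp
    moreover have "bt \<notin> set (butlast r)" using r(2) by (meson in_set_butlastD)
    ultimately show ?thesis using r e Pop by (simp add: next_config_def)
  qed
  then show ?case using Cons.IH ok Cons.prems(2) by simp
qed

lemma reachable_stack_nonempty:
  assumes W: "wps Q \<Gamma> bt q0 E" and R: "reachable E bt q0 c"
  shows "fst c \<noteq> []"
proof -
  from R obtain cs es where P: "is_path E cs es" "hd cs = ([bt], q0)" "last cs = c"
    unfolding reachable_def by blast
  from is_path_run[OF P(1)] have cs: "cs = run (hd cs) es" "valid_run E (hd cs) es" by auto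
  have "\<forall>c'\<in>set (run (hd cs) es). \<exists>r. fst c' = bt # r \<and> bt \<notin> set r"
    using valid_run_bottom_marked[OF W cs(2)] P(2) by simp
  moreover have "c \<in> set (run (hd cs) es)" using P(3) cs(1) end_config_in_run unfolding end_config_def by metis
  ultimately show ?thesis by fastforce
qed

text \<open>The edges of a good cycle starting at a nonempty stack form a cyclic climb, since the
  start is a local minimum and the cycle returns to the same state and top symbol.\<close>
lemma good_cycle_climb:
  assumes G: "good_cycle E wt cs es" and hd: "hd cs = (\<alpha>, q)" and ne: "\<alpha> \<noteq> []"
  shows "\<exists>D. climb_path E q (Top \<alpha>) D q (Top \<alpha>) \<and> climb_edges D = es"
proof -
  have P: "is_path E cs es" and lm: "local_min cs 0"
    and ends: "snd (hd cs) = snd (last cs)" "Top (fst (hd cs)) = Top (fst (last cs))"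
    using G unfolding good_cycle_def by auto
  from is_path_run[OF P] hd have cs: "cs = run (\<alpha>, q) es" and ok: "valid_run E (\<alpha>, q) es" by auto
  have "stays_above \<alpha> (\<alpha>, q) es"
  proof
    fix c assume "c \<in> set (run (\<alpha>, q) es)"
    then obtain j where j: "j < length cs" "c = cs ! j" unfolding cs[symmetric] by (metis in_set_conv_nth)
    have "cs ! 0 = (\<alpha>, q)" using cs by (metis hd_conv_nth hd_run run_ne)
    then show "prefix \<alpha> (fst c)" using lm j unfolding local_min_def by (cases "j = 0") auto
  qed
  from parse_climb[OF ok ne this] obtain D where
    "climb_path E q (Top \<alpha>) D (snd (end_config (\<alpha>, q) es)) (Top (fst (end_config (\<alpha>, q) es)))"
    "climb_edges D = es" by blast
  moreover have "end_config (\<alpha>, q) es = last cs" unfolding end_config_def using cs by simp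
  ultimately show ?thesis using ends hd by auto
qed

lemma climb_good_cycle:
  assumes D: "climb_path E q (Top \<alpha>) D q (Top \<alpha>)" and pos: "0 < path_weight wt (climb_edges D)"
  shows "good_cycle E wt (run (\<alpha>, q) (climb_edges D)) (climb_edges D)"
proof -
  let ?es = "climb_edges D" and ?cs = "run (\<alpha>, q) (climb_edges D)"
  have ok: "valid_run E (\<alpha>, q) ?es" and above: "stays_above \<alpha> (\<alpha>, q) ?es"
    and "\<exists>\<gamma>. end_config (\<alpha>, q) ?es = (\<alpha> @ \<gamma>, q) \<and> Top (\<alpha> @ \<gamma>) = Top \<alpha>"
    using climb_semantics[OF D, of \<alpha>] by blast+
  then obtain \<gamma> where lst: "last ?cs = (\<alpha> @ \<gamma>, q)" "Top (\<alpha> @ \<gamma>) = Top \<alpha>"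
    unfolding end_config_def by blast
  have "local_min ?cs 0"
    unfolding local_min_def using above by (metis hd_conv_nth hd_run run_ne fst_conv nth_mem)
  then show ?thesis
    unfolding good_cycle_def using valid_run_is_path[OF ok] pos lst by simp
qed

theorem lemma7:
  fixes Q :: "'q set" and \<Gamma> :: "'g set" and bt :: 'g and q0 :: 'q
    and E :: "('q, 'g) edge set" and w :: "('q, 'g) edge \<Rightarrow> int"
  assumes "wps Q \<Gamma> bt q0 E"
  defines "L \<equiv> card \<Gamma> * card Q"
  defines "eps \<equiv> 1 / (of_nat (L ^ ((L + 1)\<^sup>2)) * (2 * of_nat L) :: rat)"
  shows "has_reachable_good_cycle E bt q0 w eps \<longleftrightarrow>
         (\<forall>\<delta>::rat. \<delta> > 0 \<longrightarrow> has_reachable_good_cycle E bt q0 w \<delta>)"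
proof
  have sys: "pds Q \<Gamma> bt q0 E" using assms(1) by unfold_locales
  have "0 < eps" unfolding eps_def L_def using pds.N_pos[OF sys] pds.G_pos[OF sys] pds.N_def[OF sys] by simp
  then show "\<forall>\<delta>::rat. \<delta> > 0 \<longrightarrow> has_reachable_good_cycle E bt q0 w \<delta> \<Longrightarrow> has_reachable_good_cycle E bt q0 w eps"
    by blast
  assume "has_reachable_good_cycle E bt q0 w eps"
  then obtain cs es \<alpha> q where G: "good_cycle E (\<lambda>e. of_int (w e) + eps) cs es"
    and R: "reachable E bt q0 (\<alpha>, q)" and hd: "hd cs = (\<alpha>, q)"
    unfolding has_reachable_good_cycle_def by (metis prod.collapse)
  obtain D where D: "climb_path E q (Top \<alpha>) D q (Top \<alpha>)" "climb_edges D = es"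
    using good_cycle_climb[OF G hd] reachable_stack_nonempty[OF assms(1) R] by auto
  have pos: "0 < mweight w eps (mset (climb_edges D))"
    using G D(2) by (simp add: good_cycle_def path_weight_mweight)
  show "\<forall>\<delta>::rat. \<delta> > 0 \<longrightarrow> has_reachable_good_cycle E bt q0 w \<delta>"
  proof (intro allI impI)
    fix \<delta> :: rat assume "0 < \<delta>"
    from pds.eps_cycle_transfer[OF sys D(1) this] pos obtain D' where
      "climb_path E q (Top \<alpha>) D' q (Top \<alpha>)" "0 < mweight w \<delta> (mset (climb_edges D'))"
      unfolding eps_def L_def by blast
    then have "good_cycle E (\<lambda>e. of_int (w e) + \<delta>) (run (\<alpha>, q) (climb_edges D')) (climb_edges D')"
      by (simp add: climb_good_cycle path_weight_mweight)
    then show "has_reachable_good_cycle E bt q0 w \<delta>"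
      using R unfolding has_reachable_good_cycle_def by (metis hd_run)
  qed
qed

end
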